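(* Let $K$ be an algebraically closed field of characteristic zero, $\deg_1$ the weighted degree on $K[x_1,\dots,x_n]$ assigning positive real weights $w_i$ to $x_i$, $\Phi=(f_1,\dots,f_n)$ a polynomial automorphism of $K^n$, $\Phi^{-1}=(g_1,\dots,g_n)$, $d_i=\deg_1(f_i)$, $\deg_2$ the weighted degree assigning weight $d_i$ to $x_i$, $\Delta_i(P)=\mathrm{j}(g_1,\dots,g_{i-1},P,g_{i+1},\dots,g_n)$, and $I=\{Q : Q(\overline{f_1},\dots,\overline{f_n})=0\}$. Let $i$ be an index with $\deg_2(\Delta_i)\ge -w_i$. Then the leading part $\overline{\Delta_i}$ of $\Delta_i$ with respect to $\deg_2$ is locally nilpotent and satisfies $\overline{\Delta_i}(I)\subset I$.
   Context: $\mathrm{j}$ is the jacobian determinant; $\overline{f}$ is the $\deg_1$-leading term of $f$. For a p.w.h. degree $\deg$ and a $K$-derivation $\partial$, $\deg(\partial)=\sup\{\deg(\partial(P))-\deg(P):P\ne0\}$, and the leading part $\overline{\partial}$ is the $K$-derivation sending each $\deg$-homogeneous $P$ to the homogeneous component of $\partial(P)$ of degree $\deg(\partial)+\deg(P)$; equivalently if $\partial=\sum a_i\partial/\partial x_i$ and $r=\deg(\partial)$ then $\overline{\partial}=\sum b_i\partial/\partial x_i$ with $b_i$ the homogeneous component of $a_i$ of degree $r+\deg(x_i)$. *)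

theory Defs
  imports "HOL-Analysis.Analysis" "HOL-Library.Poly_Mapping" "HOL-Library.Extended_Real"
begin

text \<open>Polynomials in the variables indexed by the finite type 'n, coefficients in 'a:
  finitely supported maps from monomials (exponent vectors) to coefficients.\<close>
type_synonym ('n, 'a) mpoly = "('n \<Rightarrow>\<^sub>0 nat) \<Rightarrow>\<^sub>0 'a"

definition alg_closed :: "'a::field itself \<Rightarrow> bool" where
  "alg_closed _ \<longleftrightarrow> (\<forall>(n::nat) (c::nat \<Rightarrow> 'a). n \<ge> 1 \<longrightarrow>
      (\<exists>x::'a. x ^ n + (\<Sum>k<n. c k * x ^ k) = 0))"

definition mconst :: "'a::zero \<Rightarrow> ('n, 'a) mpoly" where
  "mconst c = Poly_Mapping.single 0 c"

definition mvar :: "'n \<Rightarrow> ('n, 'a::{zero,one}) mpoly" where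
  "mvar i = Poly_Mapping.single (Poly_Mapping.single i 1) 1"

definition msubst :: "('n, 'a::comm_ring_1) mpoly \<Rightarrow> ('n \<Rightarrow> ('m, 'a) mpoly) \<Rightarrow> ('m, 'a) mpoly" where
  "msubst Q F = (\<Sum>m\<in>Poly_Mapping.keys Q. mconst (Poly_Mapping.lookup Q m) * (\<Prod>i\<in>Poly_Mapping.keys m. F i ^ Poly_Mapping.lookup m i))"

definition inverse_maps :: "('n \<Rightarrow> ('n, 'a::comm_ring_1) mpoly) \<Rightarrow> ('n \<Rightarrow> ('n, 'a) mpoly) \<Rightarrow> bool" where
  "inverse_maps F G \<longleftrightarrow> (\<forall>i. msubst (F i) G = mvar i) \<and> (\<forall>i. msubst (G i) F = mvar i)"

definition mpderiv :: "'n \<Rightarrow> ('n, 'a::comm_ring_1) mpoly \<Rightarrow> ('n, 'a) mpoly" where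
  "mpderiv j P = (\<Sum>m\<in>Poly_Mapping.keys P.
      Poly_Mapping.single (m - Poly_Mapping.single j 1) (of_nat (Poly_Mapping.lookup m j) * Poly_Mapping.lookup P m))"

definition jac :: "('n::finite \<Rightarrow> ('n, 'a::comm_ring_1) mpoly) \<Rightarrow> ('n, 'a) mpoly" where
  "jac F = det (\<chi> a b. mpderiv b (F a))"

text \<open>Weighted degree of a monomial and of a polynomial (degree of 0 is -\<infinity>).\<close>
definition mdeg :: "('n \<Rightarrow> real) \<Rightarrow> ('n \<Rightarrow>\<^sub>0 nat) \<Rightarrow> real" where
  "mdeg w m = (\<Sum>i\<in>Poly_Mapping.keys m. w i * real (Poly_Mapping.lookup m i))"

definition wdeg :: "('n \<Rightarrow> real) \<Rightarrow> ('n, 'a::zero) mpoly \<Rightarrow> ereal" where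
  "wdeg w P = (SUP m\<in>Poly_Mapping.keys P. ereal (mdeg w m))"

definition hcomp :: "('n \<Rightarrow> real) \<Rightarrow> ereal \<Rightarrow> ('n, 'a::comm_monoid_add) mpoly \<Rightarrow> ('n, 'a) mpoly" where
  "hcomp w r P = (\<Sum>m\<in>{m\<in>Poly_Mapping.keys P. ereal (mdeg w m) = r}. Poly_Mapping.single m (Poly_Mapping.lookup P m))"

definition lead :: "('n \<Rightarrow> real) \<Rightarrow> ('n, 'a::comm_monoid_add) mpoly \<Rightarrow> ('n, 'a) mpoly" where
  "lead w P = hcomp w (wdeg w P) P"

definition der_deg :: "('n \<Rightarrow> real) \<Rightarrow> (('n, 'a::zero) mpoly \<Rightarrow> ('n, 'a) mpoly) \<Rightarrow> ereal" where
  "der_deg w D = (SUP P\<in>{P. P \<noteq> 0}. wdeg w (D P) - wdeg w P)"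

definition lead_der :: "('n::finite \<Rightarrow> real) \<Rightarrow> (('n, 'a::comm_ring_1) mpoly \<Rightarrow> ('n, 'a) mpoly)
    \<Rightarrow> ('n, 'a) mpoly \<Rightarrow> ('n, 'a) mpoly" where
  "lead_der w D P = (\<Sum>j\<in>UNIV. hcomp w (der_deg w D + ereal (w j)) (D (mvar j)) * mpderiv j P)"

definition locally_nilpotent :: "('b \<Rightarrow> 'b::zero) \<Rightarrow> bool" where
  "locally_nilpotent D \<longleftrightarrow> (\<forall>P. \<exists>k. (D ^^ k) P = 0)"

end

theory Submission
  imports Defs
begin

text \<open>Let \<open>c = j(G)(F)\<close>. Since \<open>G(F) = x\<close>, the chain rule gives
  \<open>\<Delta>\<^sub>i(Q)(F) \<cdot> j(F) = \<partial>\<^sub>i(Q(F))\<close>; for \<open>Q = g\<^sub>i\<close> this reads \<open>c \<cdot> j(F) = 1\<close>, so \<open>c\<close> is a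
  nonzero constant and \<open>\<Delta>\<^sub>i(Q)(F) = c \<partial>\<^sub>i(Q(F))\<close>. Hence \<open>\<Delta>\<^sub>i\<close> is conjugate to \<open>c \<partial>\<^sub>i\<close> and
  locally nilpotent. Let \<open>r = deg\<^sub>2(\<Delta>\<^sub>i)\<close> and \<open>\<Delta>\<^sub>0\<close> the leading part. For \<open>P\<close> homogeneous of
  degree \<open>e\<close>, \<open>\<Delta>\<^sub>i\<^sup>k P\<close> is \<open>\<Delta>\<^sub>0\<^sup>k P\<close> (homogeneous of degree \<open>e + k r\<close>) plus terms of lower
  degree, so \<open>\<Delta>\<^sub>0\<close> is locally nilpotent too.
  If \<open>Q\<close> is \<open>deg\<^sub>2\<close>-homogeneous of degree \<open>e\<close> and vanishes at the leading forms
  \<open>f\<^sub>1', \<dots>, f\<^sub>n'\<close>, then \<open>deg\<^sub>1 Q(F) < e\<close>, hence \<open>deg\<^sub>1 \<Delta>\<^sub>i(Q)(F) < e - w\<^sub>i \<le> e + r\<close>. As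
  \<open>\<Delta>\<^sub>i(Q) - \<Delta>\<^sub>0(Q)\<close> has \<open>deg\<^sub>2 < e + r\<close>, also \<open>deg\<^sub>1 \<Delta>\<^sub>0(Q)(F) < e + r\<close>, so its component of
  degree \<open>e + r\<close>, which is \<open>\<Delta>\<^sub>0(Q)(f\<^sub>1', \<dots>, f\<^sub>n')\<close>, vanishes. A general element of \<open>I\<close>
  splits into \<open>deg\<^sub>2\<close>-homogeneous components, each of which lies in \<open>I\<close>.\<close>

abbreviation lookup where "lookup \<equiv> Poly_Mapping.lookup"
abbreviation keys where "keys \<equiv> Poly_Mapping.keys"
abbreviation single where "single \<equiv> Poly_Mapping.single"

lemma mpoly_eq_sum_single: "P = (\<Sum>m\<in>keys P. single m (lookup P m))"
  by (rule poly_mapping_eqI) (simp add: lookup_sum lookup_single when_def in_keys_iff)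

lemma mpoly_mult_eq_sum_single:
  "(P::('n,'a::comm_ring_1) mpoly) * Q = (\<Sum>a\<in>keys P. \<Sum>b\<in>keys Q. single (a + b) (lookup P a * lookup Q b))"
proof -
  have "P * Q = (\<Sum>a\<in>keys P. single a (lookup P a)) * (\<Sum>b\<in>keys Q. single b (lookup Q b))"
    by (metis mpoly_eq_sum_single)
  then show ?thesis
    by (simp add: sum_product mult_single)
qed

section \<open>Weighted degrees\<close>

lemma mdeg_eq_sum_UNIV: "mdeg w (m::'n::finite \<Rightarrow>\<^sub>0 nat) = (\<Sum>i\<in>UNIV. w i * real (lookup m i))"
  unfolding mdeg_def by (rule sum.mono_neutral_left) (auto simp: in_keys_iff)

lemma mdeg_add: "mdeg w ((a::'n::finite \<Rightarrow>\<^sub>0 nat) + b) = mdeg w a + mdeg w b"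
  by (simp add: mdeg_eq_sum_UNIV lookup_add sum.distrib algebra_simps)

lemma mdeg_zero [simp]: "mdeg w 0 = 0"
  by (simp add: mdeg_def)

lemma mdeg_single_one [simp]: "mdeg w (single j 1) = w j"
  by (simp add: mdeg_def)

lemma mdeg_diff_single:
  assumes "lookup m j \<noteq> 0"
  shows "mdeg w ((m::'n::finite \<Rightarrow>\<^sub>0 nat) - single j 1) = mdeg w m - w j"
proof -
  have "m = (m - single j 1) + single j 1"
    by (rule poly_mapping_eqI) (use assms in \<open>auto simp: lookup_add lookup_minus lookup_single when_def\<close>)
  then have "mdeg w m = mdeg w (m - single j 1) + w j"
    by (metis mdeg_add mdeg_single_one)
  then show ?thesis by simp
qed

lemma mdeg_nonneg: "(\<And>j. w j \<ge> 0) \<Longrightarrow> mdeg w (m::'n::finite \<Rightarrow>\<^sub>0 nat) \<ge> 0"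
  unfolding mdeg_eq_sum_UNIV by (intro sum_nonneg mult_nonneg_nonneg) auto

lemma mdeg_pos:
  assumes "\<And>j. w j > 0" "m \<noteq> 0"
  shows "mdeg w (m::'n::finite \<Rightarrow>\<^sub>0 nat) > 0"
proof -
  obtain j where "lookup m j \<noteq> 0"
    using assms(2) by (metis lookup_zero poly_mapping_eqI)
  then have "0 < w j * real (lookup m j)"
    using assms(1) by simp
  also have "\<dots> \<le> mdeg w m"
    unfolding mdeg_eq_sum_UNIV using assms(1)
    by (intro member_le_sum mult_nonneg_nonneg) (auto simp: less_imp_le)
  finally show ?thesis .
qed

definition deg_le :: "('n \<Rightarrow> real) \<Rightarrow> real \<Rightarrow> ('n, 'a::zero) mpoly \<Rightarrow> bool" where
  "deg_le w c P \<longleftrightarrow> (\<forall>m\<in>keys P. mdeg w m \<le> c)"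

definition deg_less :: "('n \<Rightarrow> real) \<Rightarrow> real \<Rightarrow> ('n, 'a::zero) mpoly \<Rightarrow> bool" where
  "deg_less w c P \<longleftrightarrow> (\<forall>m\<in>keys P. mdeg w m < c)"

definition homogeneous :: "('n \<Rightarrow> real) \<Rightarrow> real \<Rightarrow> ('n, 'a::zero) mpoly \<Rightarrow> bool" where
  "homogeneous w c P \<longleftrightarrow> (\<forall>m\<in>keys P. mdeg w m = c)"

lemmas deg_bound_defs = deg_le_def deg_less_def homogeneous_def

lemma deg_bounds_zero [simp]: "deg_le w c 0" "deg_less w c 0" "homogeneous w c 0"
  by (auto simp: deg_bound_defs)

lemma deg_less_add:
  "deg_less w c P \<Longrightarrow> deg_less w c Q \<Longrightarrow> deg_less w c (P + Q :: ('n, 'a::comm_monoid_add) mpoly)"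
  using keys_add[of P Q] by (auto simp: deg_less_def)

lemma deg_less_diff:
  "deg_less w c P \<Longrightarrow> deg_less w c Q \<Longrightarrow> deg_less w c (P - Q :: ('n, 'a::ab_group_add) mpoly)"
  using keys_diff[of P Q] by (auto simp: deg_less_def)

lemma deg_bounds_sum:
  fixes P :: "'b \<Rightarrow> ('n, 'a::comm_monoid_add) mpoly"
  shows "(\<And>x. x \<in> A \<Longrightarrow> deg_le w c (P x)) \<Longrightarrow> deg_le w c (sum P A)"
    "(\<And>x. x \<in> A \<Longrightarrow> deg_less w c (P x)) \<Longrightarrow> deg_less w c (sum P A)"
    "(\<And>x. x \<in> A \<Longrightarrow> homogeneous w c (P x)) \<Longrightarrow> homogeneous w c (sum P A)"
  using keys_sum[of P A] by (auto simp: deg_bound_defs)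

lemma deg_bounds_mono:
  "deg_le w a P \<Longrightarrow> a \<le> b \<Longrightarrow> deg_le w b P"
  "deg_le w a P \<Longrightarrow> a < b \<Longrightarrow> deg_less w b P"
  "deg_less w a P \<Longrightarrow> a \<le> b \<Longrightarrow> deg_less w b P"
  "homogeneous w a P \<Longrightarrow> deg_le w a P"
  "deg_less w a P \<Longrightarrow> deg_le w a P"
  by (auto simp: deg_bound_defs)

lemma deg_less_homogeneous_eq_0: "deg_less w c P \<Longrightarrow> homogeneous w c P \<Longrightarrow> P = 0"
  by (auto simp: deg_bound_defs simp flip: keys_eq_empty)

lemma homogeneous_single: "homogeneous w (mdeg w m) (single m c)"
  by (simp add: homogeneous_def)

lemma homogeneous_one [simp]: "homogeneous w 0 (1 :: ('n, 'a::zero_neq_one) mpoly)"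
  by (simp add: homogeneous_def)

lemma homogeneous_mconst [simp]: "homogeneous w 0 (mconst c)"
  by (simp add: homogeneous_def mconst_def)

lemma keys_mult_obtain:
  assumes "m \<in> keys (P * Q)"
  obtains a b where "a \<in> keys P" "b \<in> keys Q" "m = a + b"
  using keys_mult[of P Q] assms by blast

lemma deg_bounds_mult:
  fixes P Q :: "('n::finite, 'a::comm_ring_1) mpoly"
  shows "deg_le w a P \<Longrightarrow> deg_le w b Q \<Longrightarrow> deg_le w (a + b) (P * Q)"
    "deg_less w a P \<Longrightarrow> deg_le w b Q \<Longrightarrow> deg_less w (a + b) (P * Q)"
    "deg_le w a P \<Longrightarrow> deg_less w b Q \<Longrightarrow> deg_less w (a + b) (P * Q)"
    "homogeneous w a P \<Longrightarrow> homogeneous w b Q \<Longrightarrow> homogeneous w (a + b) (P * Q)"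
  by (auto simp: deg_bound_defs mdeg_add elim!: keys_mult_obtain;
      meson add_mono add_less_le_mono add_le_less_mono)+

lemma wdeg_le_iff: "wdeg w P \<le> ereal c \<longleftrightarrow> deg_le w c P"
  by (simp add: wdeg_def deg_le_def SUP_le_iff)

lemma wdeg_attained:
  assumes "P \<noteq> 0"
  obtains m where "m \<in> keys P" "wdeg w P = ereal (mdeg w m)"
proof -
  let ?D = "(\<lambda>m. ereal (mdeg w m)) ` keys P"
  have "finite ?D" "?D \<noteq> {}"
    using assms by auto
  then have "wdeg w P \<in> ?D"
    unfolding wdeg_def using Max_in cSup_eq_Max by metis
  then show ?thesis using that by blast
qed

lemma deg_le_wdeg: "deg_le w (real_of_ereal (wdeg w P)) P"
proof (cases "P = 0")
  case False
  then obtain m where "wdeg w P = ereal (mdeg w m)"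
    by (rule wdeg_attained)
  then show ?thesis
    by (metis order_refl real_of_ereal.simps(1) wdeg_le_iff)
qed simp

lemma wdeg_nonneg:
  assumes "\<And>j. w j \<ge> 0" "P \<noteq> (0 :: ('n::finite, 'a::zero) mpoly)"
  shows "real_of_ereal (wdeg w P) \<ge> 0"
proof -
  obtain m where "wdeg w P = ereal (mdeg w m)"
    using assms(2) by (rule wdeg_attained)
  then show ?thesis
    using mdeg_nonneg[OF assms(1)] by simp
qed

lemma wdeg_mvar: "wdeg w (mvar j :: ('n, 'a::zero_neq_one) mpoly) = ereal (w j)"
  by (simp add: wdeg_def mvar_def mdeg_def)

section \<open>Homogeneous components and top parts\<close>

lemma lookup_hcomp: "lookup (hcomp w r P) m = (if ereal (mdeg w m) = r then lookup P m else 0)"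
  unfolding hcomp_def by (auto simp: lookup_sum lookup_single when_def in_keys_iff)

lemma homogeneous_hcomp: "homogeneous w c (hcomp w (ereal c) P)"
  by (auto simp: homogeneous_def in_keys_iff lookup_hcomp split: if_splits)

lemma sum_hcomp: "(\<Sum>e\<in>mdeg w ` keys Q. hcomp w (ereal e) Q) = Q"
proof (rule poly_mapping_eqI)
  fix m
  have "lookup (\<Sum>e\<in>mdeg w ` keys Q. hcomp w (ereal e) Q) m
      = (\<Sum>e\<in>mdeg w ` keys Q. if mdeg w m = e then lookup Q m else 0)"
    by (simp add: lookup_sum lookup_hcomp)
  also have "\<dots> = lookup Q m"
    by (cases "m \<in> keys Q") (auto simp: in_keys_iff)
  finally show "lookup (\<Sum>e\<in>mdeg w ` keys Q. hcomp w (ereal e) Q) m = lookup Q m" .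
qed

lemma homogeneous_sum_eq_0:
  fixes X :: "real \<Rightarrow> ('n, 'a::comm_monoid_add) mpoly"
  assumes "finite E" "\<And>e. e \<in> E \<Longrightarrow> homogeneous w e (X e)" "sum X E = 0" "e \<in> E"
  shows "X e = 0"
proof (rule ccontr)
  assume "X e \<noteq> 0"
  then obtain m where m: "m \<in> keys (X e)"
    by fastforce
  have "mdeg w m = e"
    using assms(2,4) m by (simp add: homogeneous_def)
  then have "lookup (X e') m = 0" if "e' \<in> E - {e}" for e'
    using assms(2)[of e'] that by (force simp: homogeneous_def in_keys_iff)
  then have "(\<Sum>e'\<in>E - {e}. lookup (X e') m) = 0"
    by simp
  then have "lookup (sum X E) m = lookup (X e) m"
    using assms(1,4) by (simp add: lookup_sum lookup_add sum.remove[of E e])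
  then show False
    using assms(3) m by (simp add: in_keys_iff)
qed

definition top_part :: "('n \<Rightarrow> real) \<Rightarrow> real \<Rightarrow> ('n, 'a::ab_group_add) mpoly \<Rightarrow> ('n, 'a) mpoly \<Rightarrow> bool" where
  "top_part w c P P' \<longleftrightarrow> homogeneous w c P' \<and> deg_less w c (P - P')"

lemma top_part_self: "homogeneous w c P \<Longrightarrow> top_part w c P P"
  by (simp add: top_part_def)

lemma top_part_hcomp:
  assumes "deg_le w c P"
  shows "top_part w c P (hcomp w (ereal c) P)"
proof -
  have "mdeg w m < c" if "m \<in> keys (P - hcomp w (ereal c) P)" for m
  proof -
    have "m \<in> keys P" "mdeg w m \<noteq> c"
      using that by (auto simp: in_keys_iff lookup_minus lookup_hcomp split: if_splits)
    then show ?thesis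
      using assms by (force simp: deg_le_def less_le)
  qed
  then show ?thesis
    by (simp add: top_part_def homogeneous_hcomp deg_less_def)
qed

lemma top_part_deg_le:
  assumes "top_part w c P P'"
  shows "deg_le w c P"
proof -
  have "keys P \<subseteq> keys (P - P') \<union> keys P'"
    using keys_add[of "P - P'" P'] by simp
  then show ?thesis
    using assms by (fastforce simp: top_part_def deg_bound_defs)
qed

lemma top_part_keys:
  assumes "top_part w c P P'" "m \<in> keys P'"
  shows "m \<in> keys P" "mdeg w m = c"
proof -
  show deg: "mdeg w m = c"
    using assms by (simp add: top_part_def homogeneous_def)
  then have "m \<notin> keys (P - P')"
    using assms(1) by (auto simp: top_part_def deg_less_def)
  then show "m \<in> keys P"
    using assms(2) by (simp add: in_keys_iff lookup_minus)
qed

lemma top_part_deg_less_eq_0: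
  assumes "deg_less w c P" "top_part w c P P'"
  shows "P' = 0"
proof -
  have "deg_less w c (P - (P - P'))"
    using assms unfolding top_part_def by (blast intro: deg_less_diff)
  then have "deg_less w c P'"
    by simp
  then show ?thesis
    using assms(2) deg_less_homogeneous_eq_0 unfolding top_part_def by blast
qed

lemma top_part_lead: "top_part w (real_of_ereal (wdeg w P)) P (lead w P)"
proof (cases "P = 0")
  case False
  then obtain m where m: "wdeg w P = ereal (mdeg w m)"
    by (rule wdeg_attained)
  have "top_part w (real_of_ereal (wdeg w P)) P (hcomp w (ereal (real_of_ereal (wdeg w P))) P)"
    by (rule top_part_hcomp[OF deg_le_wdeg])
  then show ?thesis
    using m by (simp add: lead_def)
qed (simp add: top_part_def lead_def hcomp_def)

lemma lead_neq_0:
  assumes "P \<noteq> 0"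
  shows "lead w P \<noteq> 0"
proof -
  obtain m where "m \<in> keys P" "wdeg w P = ereal (mdeg w m)"
    using assms by (rule wdeg_attained)
  then have "lookup (lead w P) m \<noteq> 0"
    by (simp add: lead_def lookup_hcomp in_keys_iff)
  then show ?thesis by auto
qed

lemma top_part_mult:
  fixes P Q :: "('n::finite, 'a::comm_ring_1) mpoly"
  assumes "top_part w a P P'" "top_part w b Q Q'"
  shows "top_part w (a + b) (P * Q) (P' * Q')"
proof -
  have "P * Q - P' * Q' = (P - P') * Q + P' * (Q - Q')"
    by (simp add: algebra_simps)
  moreover have "deg_less w (a + b) ((P - P') * Q)"
    using assms by (intro deg_bounds_mult(2) top_part_deg_le) (auto simp: top_part_def)
  moreover have "deg_less w (a + b) (P' * (Q - Q'))"
    using assms by (intro deg_bounds_mult(3) deg_bounds_mono(4)) (auto simp: top_part_def)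
  ultimately show ?thesis
    using assms deg_bounds_mult(4) by (auto simp: top_part_def intro: deg_less_add)
qed

lemma top_part_power:
  fixes P :: "('n::finite, 'a::comm_ring_1) mpoly"
  assumes "top_part w a P P'"
  shows "top_part w (real k * a) (P ^ k) (P' ^ k)"
proof (induction k)
  case (Suc k)
  then show ?case
    using top_part_mult[OF assms Suc] by (simp add: algebra_simps)
qed (simp add: top_part_self)

lemma top_part_prod:
  fixes P :: "'b \<Rightarrow> ('n::finite, 'a::comm_ring_1) mpoly"
  shows "(\<And>x. x \<in> S \<Longrightarrow> top_part w (c x) (P x) (P' x)) \<Longrightarrow>
    top_part w (sum c S) (prod P S) (prod P' S)"
  by (induction S rule: infinite_finite_induct) (auto simp: top_part_self intro: top_part_mult)

lemma top_part_sum: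
  fixes P :: "'b \<Rightarrow> ('n, 'a::ab_group_add) mpoly"
  shows "(\<And>x. x \<in> S \<Longrightarrow> top_part w c (P x) (P' x)) \<Longrightarrow> top_part w c (sum P S) (sum P' S)"
  unfolding top_part_def sum_subtractf[symmetric] by (intro conjI deg_bounds_sum) auto

section \<open>Substitution\<close>

definition subst_monom :: "('n \<Rightarrow> ('m, 'a::comm_ring_1) mpoly) \<Rightarrow> ('n \<Rightarrow>\<^sub>0 nat) \<Rightarrow> ('m, 'a) mpoly" where
  "subst_monom F m = (\<Prod>i\<in>keys m. F i ^ lookup m i)"

lemma subst_monom_eq_prod:
  "finite S \<Longrightarrow> keys m \<subseteq> S \<Longrightarrow> subst_monom F m = (\<Prod>i\<in>S. F i ^ lookup m i)"
  unfolding subst_monom_def by (rule prod.mono_neutral_left) (auto simp: in_keys_iff)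

lemma subst_monom_add: "subst_monom F (a + b) = subst_monom F a * subst_monom F b"
proof -
  let ?S = "keys a \<union> keys b"
  have "subst_monom F (a + b) = (\<Prod>i\<in>?S. F i ^ lookup (a + b) i)"
    using keys_add[of a b] by (intro subst_monom_eq_prod) auto
  also have "\<dots> = (\<Prod>i\<in>?S. F i ^ lookup a i) * (\<Prod>i\<in>?S. F i ^ lookup b i)"
    by (simp add: lookup_add power_add prod.distrib)
  also have "\<dots> = subst_monom F a * subst_monom F b"
    by (simp add: subst_monom_eq_prod[of ?S])
  finally show ?thesis .
qed

lemma subst_monom_mvar: "subst_monom mvar m = (single m 1 :: ('n, 'a::comm_ring_1) mpoly)"
proof -
  have power: "mvar i ^ k = single (single i k) (1::'a)" for i :: 'n and k
    by (induction k) (simp_all add: mvar_def mult_single single_add[symmetric] add.commute)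
  have prod: "(\<Prod>i\<in>A. single (f i) (1::'a)) = single (sum f A) 1" for f :: "'n \<Rightarrow> 'n \<Rightarrow>\<^sub>0 nat" and A
    by (induction A rule: infinite_finite_induct) (simp_all add: mult_single)
  have "subst_monom mvar m = (\<Prod>i\<in>keys m. single (single i (lookup m i)) (1::'a))"
    by (simp add: subst_monom_def power)
  also have "\<dots> = single (\<Sum>i\<in>keys m. single i (lookup m i)) 1"
    by (rule prod)
  also have "(\<Sum>i\<in>keys m. single i (lookup m i)) = m"
    by (rule poly_mapping_eqI) (simp add: lookup_sum lookup_single when_def in_keys_iff)
  finally show ?thesis .
qed

lemma msubst_eq_sum: "msubst Q F = (\<Sum>m\<in>keys Q. mconst (lookup Q m) * subst_monom F m)"
  by (simp add: msubst_def subst_monom_def)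

lemma mconst_0 [simp]: "mconst 0 = 0"
  by (simp add: mconst_def)

lemma mconst_1 [simp]: "mconst 1 = 1"
  by (simp add: mconst_def)

lemma mconst_of_int: "mconst (of_int k) = of_int k"
  by (simp add: mconst_def)

lemma mconst_add: "mconst (a + b) = mconst a + mconst b"
  by (simp add: mconst_def single_add)

lemma mconst_mult: "mconst (a * b) = (mconst a * mconst b :: ('n, 'a::comm_ring_1) mpoly)"
  by (simp add: mconst_def mult_single)

lemma additive_msubst:
  fixes F :: "'n \<Rightarrow> ('m, 'a::comm_ring_1) mpoly"
  shows "Modules.additive (\<lambda>Q. msubst Q F)"
proof
  fix P Q :: "('n, 'a) mpoly"
  let ?S = "keys P \<union> keys Q"
  have eq: "msubst R F = (\<Sum>m\<in>?S. mconst (lookup R m) * subst_monom F m)"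
    if "keys R \<subseteq> ?S" for R :: "('n, 'a) mpoly"
    unfolding msubst_eq_sum using that by (intro sum.mono_neutral_left) (auto simp: in_keys_iff)
  show "msubst (P + Q) F = msubst P F + msubst Q F"
    using keys_add[of P Q]
    by (simp add: eq lookup_add mconst_add distrib_right sum.distrib)
qed

lemmas msubst_add = additive.add[OF additive_msubst]
  and msubst_diff = additive.diff[OF additive_msubst]
  and msubst_sum = additive.sum[OF additive_msubst]
  and msubst_zero [simp] = additive.zero[OF additive_msubst]

lemma msubst_single: "msubst (single m c) F = mconst c * subst_monom F m"
  by (simp add: msubst_eq_sum)

lemma msubst_mult: "msubst (P * Q) F = msubst P F * msubst Q F"
proof -
  have "msubst (P * Q) F = (\<Sum>a\<in>keys P. \<Sum>b\<in>keys Q. msubst (single (a + b) (lookup P a * lookup Q b)) F)"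
    by (subst mpoly_mult_eq_sum_single) (simp add: msubst_sum)
  also have "\<dots> = (\<Sum>a\<in>keys P. \<Sum>b\<in>keys Q.
      (mconst (lookup P a) * subst_monom F a) * (mconst (lookup Q b) * subst_monom F b))"
    by (simp add: msubst_single subst_monom_add mconst_mult ac_simps)
  finally show ?thesis
    by (simp add: msubst_eq_sum sum_product)
qed

lemma msubst_mconst [simp]: "msubst (mconst c) F = mconst c"
  by (simp add: mconst_def msubst_single subst_monom_def)

lemma msubst_one [simp]: "msubst 1 F = 1"
  by (metis mconst_def msubst_mconst single_one)

lemma msubst_power: "msubst (P ^ k) F = msubst P F ^ k"
  by (induction k) (simp_all add: msubst_mult)

lemma msubst_prod: "msubst (prod P A) F = (\<Prod>x\<in>A. msubst (P x) F)"
  by (induction A rule: infinite_finite_induct) (simp_all add: msubst_mult)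

lemma msubst_mvar [simp]: "msubst (mvar j) F = F j"
  by (simp add: mvar_def msubst_single subst_monom_def mconst_def)

lemma msubst_of_int [simp]: "msubst (of_int k) F = of_int k"
  by (metis mconst_of_int msubst_mconst)

lemma msubst_msubst: "msubst (msubst Q G) F = msubst Q (\<lambda>j. msubst (G j) F)"
  unfolding msubst_eq_sum[of Q G] subst_monom_def
  by (simp only: msubst_sum msubst_mult msubst_prod msubst_power msubst_mconst)
    (simp only: msubst_eq_sum[of Q] subst_monom_def)

lemma msubst_mvar_id: "msubst Q mvar = Q"
  by (subst (2) mpoly_eq_sum_single) (simp add: msubst_eq_sum subst_monom_mvar mconst_def mult_single)

lemma inverse_maps_msubst_msubst:
  "inverse_maps F G \<Longrightarrow> msubst (msubst Q F) G = Q"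
  by (simp add: msubst_msubst inverse_maps_def msubst_mvar_id)

lemma top_part_msubst:
  fixes F F' :: "'n \<Rightarrow> ('m::finite, 'a::comm_ring_1) mpoly"
  assumes "\<And>j. top_part w (d j) (F j) (F' j)" "homogeneous d e Q"
  shows "top_part w e (msubst Q F) (msubst Q F')"
  unfolding msubst_eq_sum
proof (rule top_part_sum)
  fix m
  assume "m \<in> keys Q"
  then have "mdeg d m = e"
    using assms(2) by (simp add: homogeneous_def)
  moreover have "top_part w (\<Sum>i\<in>keys m. real (lookup m i) * d i) (subst_monom F m) (subst_monom F' m)"
    unfolding subst_monom_def by (intro top_part_prod top_part_power assms(1))
  ultimately show "top_part w e (mconst (lookup Q m) * subst_monom F m) (mconst (lookup Q m) * subst_monom F' m)"
    using top_part_mult[OF top_part_self[OF homogeneous_mconst]]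
    by (fastforce simp: mdeg_def mult.commute)
qed

lemma deg_less_msubst:
  fixes F F' :: "'n \<Rightarrow> ('m::finite, 'a::comm_ring_1) mpoly"
  assumes "\<And>j. top_part w (d j) (F j) (F' j)" "deg_less d c Q"
  shows "deg_less w c (msubst Q F)"
  unfolding msubst_eq_sum
proof (rule deg_bounds_sum(2))
  fix m
  assume "m \<in> keys Q"
  then have "mdeg d m < c"
    using assms(2) by (simp add: deg_less_def)
  moreover have "top_part w (mdeg d m) (msubst (single m (lookup Q m)) F) (msubst (single m (lookup Q m)) F')"
    using assms(1) by (rule top_part_msubst) (rule homogeneous_single)
  ultimately show "deg_less w c (mconst (lookup Q m) * subst_monom F m)"
    by (auto simp: msubst_single dest: top_part_deg_le deg_bounds_mono(2))
qed

text \<open>Renaming the variables into \<open>nat\<close> embeds the ring into one for which the library provides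
  the integral domain instance.\<close>

lemma mpoly_mult_neq_0:
  fixes P Q :: "('n::countable, 'a::idom) mpoly"
  assumes "P \<noteq> 0" "Q \<noteq> 0"
  shows "P * Q \<noteq> 0"
proof
  define rename :: "('n, 'a) mpoly \<Rightarrow> (nat, 'a) mpoly" where
    "rename R = msubst R (\<lambda>j. mvar (to_nat j))" for R
  have rename_inj: "rename R = 0 \<Longrightarrow> R = 0" for R
    using msubst_msubst[of R "\<lambda>j. mvar (to_nat j)" "\<lambda>k. mvar (from_nat k) :: ('n, 'a) mpoly"]
    by (simp add: rename_def msubst_mvar_id)
  assume "P * Q = 0"
  then have "rename P * rename Q = 0"
    unfolding rename_def by (metis msubst_mult msubst_zero)
  then show False
    using assms rename_inj by auto
qed

section \<open>Partial derivatives\<close>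

lemma mpderiv_eq_sum:
  "finite S \<Longrightarrow> keys P \<subseteq> S \<Longrightarrow>
    mpderiv j P = (\<Sum>m\<in>S. single (m - single j 1) (of_nat (lookup m j) * lookup P m))"
  unfolding mpderiv_def by (intro sum.mono_neutral_left) (auto simp: in_keys_iff)

lemma additive_mpderiv: "Modules.additive (mpderiv j :: ('n, 'a::comm_ring_1) mpoly \<Rightarrow> _)"
proof
  fix P Q :: "('n, 'a) mpoly"
  have "finite (keys P \<union> keys Q)" "keys (P + Q) \<subseteq> keys P \<union> keys Q"
    using keys_add[of P Q] by auto
  then show "mpderiv j (P + Q) = mpderiv j P + mpderiv j Q"
    by (simp add: mpderiv_eq_sum[of "keys P \<union> keys Q"] lookup_add distrib_left single_add sum.distrib)
qed

lemmas mpderiv_add = additive.add[OF additive_mpderiv]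
  and mpderiv_diff = additive.diff[OF additive_mpderiv]
  and mpderiv_sum = additive.sum[OF additive_mpderiv]
  and mpderiv_zero [simp] = additive.zero[OF additive_mpderiv]

lemma mpderiv_single: "mpderiv j (single m c) = single (m - single j 1) (of_nat (lookup m j) * c)"
  by (cases "c = 0") (simp_all add: mpderiv_def)

lemma mpderiv_single_mult:
  fixes a b :: "'n \<Rightarrow>\<^sub>0 nat"
  shows "mpderiv j (single a p * single b q) =
    mpderiv j (single a p) * single b q + single a p * mpderiv j (single b (q::'a::comm_ring_1))"
proof -
  have shift: "a - single j 1 + b = a + b - single j 1" if "lookup a j \<noteq> 0" for a b :: "'n \<Rightarrow>\<^sub>0 nat"
    by (rule poly_mapping_eqI) (use that in \<open>auto simp: lookup_add lookup_minus lookup_single when_def\<close>)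
  have left: "mpderiv j (single a p) * single b q = single (a + b - single j 1) (of_nat (lookup a j) * p * q)"
    by (cases "lookup a j = 0") (use shift[of a b] in \<open>simp_all add: mpderiv_single mult_single\<close>)
  have right: "single a p * mpderiv j (single b q) = single (a + b - single j 1) (of_nat (lookup b j) * p * q)"
    by (cases "lookup b j = 0")
      (use shift[of b a] in \<open>simp_all add: mpderiv_single mult_single ac_simps\<close>)
  show ?thesis
    unfolding left right by (simp add: mult_single mpderiv_single lookup_add single_add[symmetric] algebra_simps)
qed

lemma mpderiv_mult: "mpderiv j (P * Q) = mpderiv j P * Q + P * mpderiv j (Q::('n, 'a::comm_ring_1) mpoly)"
proof -
  let ?P = "\<lambda>a. single a (lookup P a)" and ?Q = "\<lambda>b. single b (lookup Q b)"
  have "mpderiv j (P * Q) = (\<Sum>a\<in>keys P. \<Sum>b\<in>keys Q. mpderiv j (?P a * ?Q b))"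
    by (subst mpoly_mult_eq_sum_single) (simp add: mpderiv_sum mult_single)
  also have "\<dots> = mpderiv j (sum ?P (keys P)) * sum ?Q (keys Q) + sum ?P (keys P) * mpderiv j (sum ?Q (keys Q))"
    by (simp add: mpderiv_single_mult sum.distrib mpderiv_sum sum_product)
  finally show ?thesis
    by (simp flip: mpoly_eq_sum_single)
qed

lemma mpderiv_mconst [simp]: "mpderiv j (mconst c) = 0"
  by (simp add: mconst_def mpderiv_single)

lemma mpderiv_mvar: "mpderiv j (mvar i) = (if j = i then 1 else 0)"
  by (simp add: mvar_def mpderiv_single lookup_single when_def)

lemma mpoly_induct [case_names mconst mvar add mult]:
  assumes mconst: "\<And>c. S (mconst c)" and mvar: "\<And>i. S (mvar i)"
    and add: "\<And>P Q. S P \<Longrightarrow> S Q \<Longrightarrow> S (P + Q)" and mult: "\<And>P Q. S P \<Longrightarrow> S Q \<Longrightarrow> S (P * Q)"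
  shows "S (P::('n, 'a::comm_ring_1) mpoly)"
proof -
  have power: "S (mvar i ^ k)" for i k
    by (induction k) (use mconst[of 1] mvar mult in auto)
  have prod: "S (prod f A)" if "\<And>x. x \<in> A \<Longrightarrow> S (f x)" for f :: "'n \<Rightarrow> ('n, 'a) mpoly" and A
    using that by (induction A rule: infinite_finite_induct) (use mconst[of 1] mult in auto)
  have sum: "S (sum f A)" if "\<And>x. x \<in> A \<Longrightarrow> S (f x)" for f :: "('n \<Rightarrow>\<^sub>0 nat) \<Rightarrow> ('n, 'a) mpoly" and A
    using that by (induction A rule: infinite_finite_induct) (use mconst[of 0] add in auto)
  have "S (msubst P mvar)"
    unfolding msubst_eq_sum subst_monom_def by (intro sum mult mconst prod power)
  then show ?thesis
    by (simp add: msubst_mvar_id)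
qed

lemma mpderiv_msubst:
  "mpderiv j (msubst Q F) = (\<Sum>k\<in>UNIV. msubst (mpderiv k Q) F * mpderiv j (F k))"
  for Q :: "('n::finite, 'a::comm_ring_1) mpoly"
proof (induction Q rule: mpoly_induct)
  case (mvar i)
  have "msubst (mpderiv k (mvar i)) F * mpderiv j (F k) = (if k = i then mpderiv j (F k) else 0)" for k
    by (simp add: mpderiv_mvar)
  then show ?case
    by simp
next
  case (add P Q)
  then show ?case
    by (simp add: msubst_add mpderiv_add distrib_right sum.distrib)
next
  case (mult P Q)
  let ?s = "\<lambda>X. msubst X F"
  have "(\<Sum>k\<in>UNIV. ?s (mpderiv k (P * Q)) * mpderiv j (F k))
      = (\<Sum>k\<in>UNIV. ?s (mpderiv k P) * mpderiv j (F k) * ?s Q + ?s P * (?s (mpderiv k Q) * mpderiv j (F k)))"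
    by (intro sum.cong refl) (simp add: mpderiv_mult msubst_add msubst_mult algebra_simps)
  also have "\<dots> = (\<Sum>k\<in>UNIV. ?s (mpderiv k P) * mpderiv j (F k)) * ?s Q
      + ?s P * (\<Sum>k\<in>UNIV. ?s (mpderiv k Q) * mpderiv j (F k))"
    by (simp add: sum.distrib sum_distrib_left sum_distrib_right)
  also have "\<dots> = mpderiv j (msubst (P * Q) F)"
    using mult by (simp only: msubst_mult mpderiv_mult)
  finally show ?case
    by (rule sym)
qed simp

lemma keys_mpderiv_obtain:
  fixes P :: "('n::finite, 'a::comm_ring_1) mpoly"
  assumes "m \<in> keys (mpderiv j P)"
  obtains m' where "m' \<in> keys P" "mdeg w m = mdeg w m' - w j"
proof -
  have "m \<in> (\<Union>m'\<in>keys P. keys (single (m' - single j 1) (of_nat (lookup m' j) * lookup P m')))"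
    using keys_sum assms unfolding mpderiv_def by (rule subsetD)
  then obtain m' where m': "m' \<in> keys P" "m \<in> keys (single (m' - single j 1) (of_nat (lookup m' j) * lookup P m'))"
    by (rule UN_E)
  then have "of_nat (lookup m' j) * lookup P m' \<noteq> 0" and m: "m = m' - single j 1"
    by (simp_all split: if_splits)
  then have "lookup m' j \<noteq> 0"
    by (metis mult_zero_left of_nat_0)
  then show ?thesis
    using that[OF m'(1)] mdeg_diff_single m by blast
qed

lemma deg_bounds_mpderiv:
  fixes P :: "('n::finite, 'a::comm_ring_1) mpoly"
  shows "deg_le w c P \<Longrightarrow> deg_le w (c - w j) (mpderiv j P)"
    "deg_less w c P \<Longrightarrow> deg_less w (c - w j) (mpderiv j P)"
    "homogeneous w c P \<Longrightarrow> homogeneous w (c - w j) (mpderiv j P)"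
  by (auto simp: deg_bound_defs elim!: keys_mpderiv_obtain[where w = w])

lemma mpderiv_funpow_eventually_0: "\<exists>k. (mpderiv i ^^ k) (P::('n::finite, 'a::comm_ring_1) mpoly) = 0"
proof -
  define x_i where "x_i = (\<lambda>j. if j = i then 1 else (0::real))"
  define W where "W = real_of_ereal (wdeg x_i P)"
  have bound: "deg_le x_i (W - real k) ((mpderiv i ^^ k) P)" for k
  proof (induction k)
    case (Suc k)
    then show ?case
      using deg_bounds_mpderiv(1)[OF Suc, of i] by (simp add: x_i_def algebra_simps)
  qed (simp add: W_def deg_le_wdeg)
  obtain k where k: "W < real k"
    using reals_Archimedean2 by blast
  have "keys ((mpderiv i ^^ k) P) = {}"
  proof (rule equals0I)
    fix m
    assume "m \<in> keys ((mpderiv i ^^ k) P)"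
    then have "mdeg x_i m \<le> W - real k"
      using bound[of k] by (simp add: deg_le_def)
    moreover have "mdeg x_i m \<ge> 0"
      by (rule mdeg_nonneg) (simp add: x_i_def)
    ultimately show False
      using k by linarith
  qed
  then show ?thesis
    by auto
qed

section \<open>Jacobians\<close>

lemma msubst_det: "msubst (det A) F = det (\<chi> a b. msubst (A $ a $ b) F)"
  for A :: "('n::finite, 'a::comm_ring_1) mpoly ^ 'k::finite ^ 'k"
  unfolding det_def by (simp add: msubst_sum msubst_mult msubst_prod)

lemma msubst_jac_mult_jac:
  fixes H F :: "'n::finite \<Rightarrow> ('n, 'a::comm_ring_1) mpoly"
  shows "msubst (jac H) F * jac F = det (\<chi> a c. mpderiv c (msubst (H a) F))"
proof -
  have "msubst (jac H) F * jac F = det ((\<chi> a b. msubst (mpderiv b (H a)) F) ** (\<chi> b c. mpderiv c (F b)))"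
    by (simp add: jac_def msubst_det det_mul)
  also have "(\<chi> a b. msubst (mpderiv b (H a)) F) ** (\<chi> b c. mpderiv c (F b)) = (\<chi> a c. mpderiv c (msubst (H a) F))"
    by (simp add: matrix_matrix_mult_def mpderiv_msubst vec_eq_iff)
  finally show ?thesis .
qed

lemma det_row_expand:
  fixes C :: "'n::finite \<Rightarrow> 'a::comm_ring_1 ^ 'n"
  shows "det (\<chi> a. if a = k then (\<chi> c. f c) else C a)
    = (\<Sum>j\<in>UNIV. f j * det (\<chi> a. if a = k then axis j 1 else C a))"
proof -
  have row: "(\<chi> c. f c) = (\<Sum>j\<in>UNIV. f j *s axis j 1)"
    by (simp add: vec_eq_iff axis_def if_distrib[of "\<lambda>x. _ * x"] cong: if_cong)
  have "det (\<chi> a. if a = k then (\<chi> c. f c) else C a)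
      = det (\<chi> a. if a = k then (\<Sum>j\<in>UNIV. f j *s axis j 1) else C a)"
    by (simp only: row)
  also have "\<dots> = (\<Sum>j\<in>UNIV. det (\<chi> a. if a = k then f j *s axis j 1 else C a))"
    by (rule det_linear_row_sum) simp
  also have "\<dots> = (\<Sum>j\<in>UNIV. f j * det (\<chi> a. if a = k then axis j 1 else C a))"
    by (simp add: det_row_mul)
  finally show ?thesis .
qed

lemma jac_fun_upd: "jac (G(i := P)) = det (\<chi> a. if a = i then (\<chi> c. mpderiv c P) else (\<chi> c. mpderiv c (G a)))"
  unfolding jac_def by (rule arg_cong[where f = det]) (simp add: vec_eq_iff)

lemma det_axis_rows:
  "det (\<chi> a. if a = i then axis j 1 else axis a 1) = (if j = i then 1 else (0::'a::comm_ring_1))"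
  for i j :: "'n::finite"
proof (cases "j = i")
  case True
  then have "(\<chi> a. if a = i then axis j 1 else axis a 1) = (mat 1 :: 'a ^ 'n ^ 'n)"
    by (simp add: vec_eq_iff mat_def axis_def)
  then show ?thesis
    using True by simp
next
  case False
  then show ?thesis
    by (subst det_identical_rows[of i j]) (auto simp: row_def vec_eq_iff)
qed

lemma jac_fun_upd_expand:
  fixes G :: "'n::finite \<Rightarrow> ('n, 'a::comm_ring_1) mpoly"
  shows "jac (G(i := P)) = (\<Sum>j\<in>UNIV. jac (G(i := mvar j)) * mpderiv j P)"
proof -
  have "jac (G(i := P)) = (\<Sum>j\<in>UNIV. mpderiv j P * det (\<chi> a. if a = i then axis j 1 else (\<chi> c. mpderiv c (G a))))"
    unfolding jac_fun_upd by (rule det_row_expand)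
  then show ?thesis
    by (simp add: jac_fun_upd mpderiv_mvar axis_def mult.commute cong: if_cong)
qed

text \<open>By the chain rule and \<open>G(F) = x\<close>, the \<open>i\<close>-th row of the product of Jacobian matrices is
  the gradient of \<open>Q(F)\<close> and all other rows are unit vectors.\<close>

lemma msubst_jac_fun_upd_mult_jac:
  fixes F G :: "'n::finite \<Rightarrow> ('n, 'a::comm_ring_1) mpoly"
  assumes "inverse_maps F G"
  shows "msubst (jac (G(i := Q))) F * jac F = mpderiv i (msubst Q F)"
proof -
  have "msubst (G a) F = mvar a" for a
    using assms by (simp add: inverse_maps_def)
  then have "msubst (jac (G(i := Q))) F * jac F
      = det (\<chi> a. if a = i then (\<chi> c. mpderiv c (msubst Q F)) else axis a 1)"
    unfolding msubst_jac_mult_jac by (intro arg_cong[where f = det]) (simp add: vec_eq_iff mpderiv_mvar axis_def)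
  also have "\<dots> = (\<Sum>j\<in>UNIV. mpderiv j (msubst Q F) * det (\<chi> a. if a = i then axis j 1 else axis a 1))"
    by (rule det_row_expand)
  also have "\<dots> = mpderiv i (msubst Q F)"
    by (simp add: det_axis_rows if_distrib[of "\<lambda>x. _ * x"] cong: if_cong)
  finally show ?thesis .
qed

text \<open>Compare top parts for the total degree: they multiply to the constant term of \<open>1\<close>.\<close>

lemma mpoly_unit_eq_mconst:
  fixes u v :: "('n::finite, 'a::idom) mpoly"
  assumes "u * v = 1"
  shows "v = mconst (lookup v 0)"
proof -
  define w :: "'n \<Rightarrow> real" where "w = (\<lambda>_. 1)"
  define a b where "a = real_of_ereal (wdeg w u)" and "b = real_of_ereal (wdeg w v)"
  have "u \<noteq> 0" "v \<noteq> 0"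
    using assms by auto
  then have "a \<ge> 0" "b \<ge> 0"
    by (simp_all add: a_def b_def wdeg_nonneg w_def)
  have top: "top_part w (a + b) 1 (lead w u * lead w v)"
    using top_part_mult[OF top_part_lead[of w u] top_part_lead[of w v]] assms by (simp add: a_def b_def)
  have "lead w u * lead w v \<noteq> 0"
    using \<open>u \<noteq> 0\<close> \<open>v \<noteq> 0\<close> by (simp add: lead_neq_0 mpoly_mult_neq_0)
  then obtain m where "m \<in> keys (lead w u * lead w v)"
    by fastforce
  then have "m \<in> keys (1 :: ('n, 'a) mpoly)" "mdeg w m = a + b"
    using top_part_keys[OF top] by blast+
  then have "b = 0"
    using \<open>a \<ge> 0\<close> \<open>b \<ge> 0\<close> by simp
  then have "keys v \<subseteq> {0}"
    using deg_le_wdeg[of w v] mdeg_pos[of w] by (force simp: b_def w_def deg_le_def)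
  then show ?thesis
    by (intro poly_mapping_eqI) (auto simp: mconst_def lookup_single when_def in_keys_iff)
qed

lemma msubst_jac_inverse:
  fixes F G :: "'n::finite \<Rightarrow> ('n, 'a::comm_ring_1) mpoly"
  assumes "inverse_maps F G"
  shows "msubst (jac G) F * jac F = 1"
proof -
  have "msubst (G i) F = mvar i" for i
    using assms by (simp add: inverse_maps_def)
  moreover have "msubst (jac G) F * jac F = mpderiv i (msubst (G i) F)" for i
    using msubst_jac_fun_upd_mult_jac[OF assms, of i "G i"] by simp
  ultimately show ?thesis
    by (simp add: mpderiv_mvar)
qed

lemma msubst_jac_eq_mconst:
  fixes F G :: "'n::finite \<Rightarrow> ('n, 'a::idom) mpoly"
  assumes "inverse_maps F G"
  obtains c where "msubst (jac G) F = mconst c"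
  using mpoly_unit_eq_mconst[of "jac F"] msubst_jac_inverse[OF assms] by (metis mult.commute)

lemma msubst_jac_fun_upd:
  fixes F G :: "'n::finite \<Rightarrow> ('n, 'a::comm_ring_1) mpoly"
  assumes "inverse_maps F G"
  shows "msubst (jac (G(i := Q))) F = msubst (jac G) F * mpderiv i (msubst Q F)"
proof -
  have "jac F * msubst (jac G) F = 1"
    using msubst_jac_inverse[OF assms] by (simp add: mult.commute)
  then have "msubst (jac (G(i := Q))) F = msubst (jac (G(i := Q))) F * jac F * msubst (jac G) F"
    by (simp add: mult.assoc)
  also have "\<dots> = mpderiv i (msubst Q F) * msubst (jac G) F"
    by (simp only: msubst_jac_fun_upd_mult_jac[OF assms])
  finally show ?thesis
    by (simp only: mult.commute)
qed

lemma mpderiv_mconst_mult: "mpderiv j (mconst c * P) = mconst c * mpderiv j P"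
  by (simp add: mpderiv_mult)

lemma locally_nilpotent_jac_fun_upd:
  fixes F G :: "'n::finite \<Rightarrow> ('n, 'a::idom) mpoly"
  assumes "inverse_maps F G"
  shows "locally_nilpotent (\<lambda>P. jac (G(i := P)))"
  unfolding locally_nilpotent_def
proof
  fix Q
  let ?\<Delta> = "\<lambda>P. jac (G(i := P))"
  obtain c where c: "msubst (jac G) F = mconst c"
    using assms by (rule msubst_jac_eq_mconst)
  have iterate: "msubst ((?\<Delta> ^^ k) Q) F = mconst (c ^ k) * (mpderiv i ^^ k) (msubst Q F)" for k
  proof (induction k)
    case (Suc k)
    have "msubst ((?\<Delta> ^^ Suc k) Q) F = mconst c * mpderiv i (mconst (c ^ k) * (mpderiv i ^^ k) (msubst Q F))"
      by (simp only: funpow.simps o_apply msubst_jac_fun_upd[OF assms] c Suc.IH)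
    also have "\<dots> = mconst (c ^ Suc k) * (mpderiv i ^^ Suc k) (msubst Q F)"
      by (simp add: mpderiv_mconst_mult mconst_mult mult.assoc)
    finally show ?case .
  qed simp
  obtain k where "(mpderiv i ^^ k) (msubst Q F) = 0"
    using mpderiv_funpow_eventually_0 by blast
  then have "msubst (msubst ((?\<Delta> ^^ k) Q) F) G = 0"
    by (simp add: iterate)
  then have "(?\<Delta> ^^ k) Q = 0"
    by (simp only: inverse_maps_msubst_msubst[OF assms])
  then show "\<exists>k. (?\<Delta> ^^ k) Q = 0" ..
qed

lemma deg_less_msubst_jac_fun_upd:
  fixes F G :: "'n::finite \<Rightarrow> ('n, 'a::idom) mpoly"
  assumes "inverse_maps F G" "deg_less w c (msubst Q F)"
  shows "deg_less w (c - w i) (msubst (jac (G(i := Q))) F)"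
proof -
  obtain a where "msubst (jac G) F = mconst a"
    using assms(1) by (rule msubst_jac_eq_mconst)
  then show ?thesis
    using deg_bounds_mult(3)[OF deg_bounds_mono(4)[OF homogeneous_mconst] deg_bounds_mpderiv(2)[OF assms(2)]]
    by (simp add: msubst_jac_fun_upd[OF assms(1)])
qed

section \<open>Derivations and their leading parts\<close>

lemma additive_funpow:
  fixes f :: "'a::ab_group_add \<Rightarrow> 'a"
  assumes "Modules.additive f"
  shows "Modules.additive (f ^^ k)"
  by (induction k) (use assms in \<open>auto simp: Modules.additive_def\<close>)

lemma funpow_eq_0_mono:
  fixes f :: "'a::ab_group_add \<Rightarrow> 'a"
  assumes "Modules.additive f" "(f ^^ k) x = 0" "k \<le> l"
  shows "(f ^^ l) x = 0"
proof -
  have "(f ^^ l) x = (f ^^ (l - k)) ((f ^^ k) x)"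
    using assms(3) by (metis funpow_add le_add_diff_inverse2 o_apply)
  then show ?thesis
    using assms(2) additive.zero[OF additive_funpow[OF assms(1)]] by simp
qed

lemma funpow_eq_0_sum:
  fixes f :: "'a::ab_group_add \<Rightarrow> 'a"
  assumes "Modules.additive f" "finite A" "\<And>x. x \<in> A \<Longrightarrow> \<exists>k. (f ^^ k) (g x) = 0"
  shows "\<exists>k. (f ^^ k) (sum g A) = 0"
  using assms(2,3)
proof (induction A rule: finite_induct)
  case empty
  show ?case using additive.zero[OF additive_funpow[OF assms(1)]] by auto
next
  case (insert x A)
  then obtain k l where k: "(f ^^ k) (g x) = 0" and l: "(f ^^ l) (sum g A) = 0"
    by blast
  have "(f ^^ (k + l)) (g x) = 0" "(f ^^ (k + l)) (sum g A) = 0"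
    using funpow_eq_0_mono[OF assms(1)] k l by auto
  then show ?case
    using insert(1,2) additive.add[OF additive_funpow[OF assms(1)]] by (auto intro!: exI[of _ "k + l"])
qed

definition mderivation :: "('n::finite \<Rightarrow> ('n, 'a::comm_ring_1) mpoly) \<Rightarrow> ('n, 'a) mpoly \<Rightarrow> ('n, 'a) mpoly" where
  "mderivation a P = (\<Sum>j\<in>UNIV. a j * mpderiv j P)"

lemma additive_mderivation: "Modules.additive (mderivation a)"
  by unfold_locales (simp add: mderivation_def mpderiv_add distrib_left sum.distrib)

lemma jac_fun_upd_eq_mderivation:
  "(\<lambda>P. jac (G(i := P))) = mderivation (\<lambda>j. jac (G(i := mvar j)))"
  unfolding mderivation_def by (rule ext) (rule jac_fun_upd_expand)

lemma lead_der_eq_mderivation: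
  "der_deg w D = ereal r \<Longrightarrow> lead_der w D = mderivation (\<lambda>j. hcomp w (ereal (r + w j)) (D (mvar j)))"
  by (rule ext) (simp add: lead_der_def mderivation_def)

lemma deg_bounds_mderivation:
  fixes a :: "'n::finite \<Rightarrow> ('n, 'a::comm_ring_1) mpoly"
  shows "(\<And>j. deg_le w (r + w j) (a j)) \<Longrightarrow> deg_le w c P \<Longrightarrow> deg_le w (c + r) (mderivation a P)"
    "(\<And>j. deg_le w (r + w j) (a j)) \<Longrightarrow> deg_less w c P \<Longrightarrow> deg_less w (c + r) (mderivation a P)"
    "(\<And>j. deg_less w (r + w j) (a j)) \<Longrightarrow> deg_le w c P \<Longrightarrow> deg_less w (c + r) (mderivation a P)"
    "(\<And>j. homogeneous w (r + w j) (a j)) \<Longrightarrow> homogeneous w c P \<Longrightarrow> homogeneous w (c + r) (mderivation a P)"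
proof -
  have shift: "(r + w j) + (c - w j) = c + r" for j
    by simp
  show "deg_le w (c + r) (mderivation a P)" if "\<And>j. deg_le w (r + w j) (a j)" "deg_le w c P"
    unfolding mderivation_def
    by (rule deg_bounds_sum) (metis shift deg_bounds_mult(1) deg_bounds_mpderiv(1) that)
  show "deg_less w (c + r) (mderivation a P)" if "\<And>j. deg_le w (r + w j) (a j)" "deg_less w c P"
    unfolding mderivation_def
    by (rule deg_bounds_sum) (metis shift deg_bounds_mult(3) deg_bounds_mpderiv(2) that)
  show "deg_less w (c + r) (mderivation a P)" if "\<And>j. deg_less w (r + w j) (a j)" "deg_le w c P"
    unfolding mderivation_def
    by (rule deg_bounds_sum) (metis shift deg_bounds_mult(2) deg_bounds_mpderiv(1) that)
  show "homogeneous w (c + r) (mderivation a P)" if "\<And>j. homogeneous w (r + w j) (a j)" "homogeneous w c P"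
    unfolding mderivation_def
    by (rule deg_bounds_sum) (metis shift deg_bounds_mult(4) deg_bounds_mpderiv(3) that)
qed

lemma mvar_neq_0 [simp]: "mvar j \<noteq> (0 :: ('n, 'a::zero_neq_one) mpoly)"
proof
  assume "mvar j = (0 :: ('n, 'a) mpoly)"
  then have "lookup (mvar j :: ('n, 'a) mpoly) (single j 1) = 0"
    by simp
  then show False
    by (simp add: mvar_def)
qed

lemma deg_le_der_deg:
  fixes D :: "('n, 'a::zero_neq_one) mpoly \<Rightarrow> ('n, 'a) mpoly"
  assumes "der_deg w D = ereal r"
  shows "deg_le w (r + w j) (D (mvar j))"
proof -
  have "wdeg w (D (mvar j)) - wdeg w (mvar j :: ('n, 'a) mpoly) \<le> der_deg w D"
    unfolding der_deg_def by (rule SUP_upper) simp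
  then have "wdeg w (D (mvar j)) \<le> ereal (r + w j)"
    using assms by (cases "wdeg w (D (mvar j))") (simp_all add: wdeg_mvar)
  then show ?thesis
    by (simp add: wdeg_le_iff)
qed

lemma der_deg_mderivation_less_PInf:
  fixes a :: "'n::finite \<Rightarrow> ('n, 'a::comm_ring_1) mpoly"
  shows "der_deg w (mderivation a) < \<infinity>"
proof -
  define C where "C = Max (range (\<lambda>j. real_of_ereal (wdeg w (a j)) - w j))"
  have coeff: "deg_le w (C + w j) (a j)" for j
  proof -
    have "real_of_ereal (wdeg w (a j)) - w j \<le> C"
      unfolding C_def by (rule Max_ge) auto
    then have "real_of_ereal (wdeg w (a j)) \<le> C + w j"
      by simp
    then show ?thesis
      by (rule deg_bounds_mono(1)[OF deg_le_wdeg])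
  qed
  have "der_deg w (mderivation a) \<le> ereal C"
    unfolding der_deg_def
  proof (rule SUP_least)
    fix P :: "('n, 'a) mpoly"
    assume "P \<in> {P. P \<noteq> 0}"
    then have "P \<noteq> 0"
      by simp
    then obtain m where "m \<in> keys P" and m: "wdeg w P = ereal (mdeg w m)"
      by (rule wdeg_attained)
    have "wdeg w (mderivation a P) \<le> ereal (mdeg w m + C)"
      using deg_bounds_mderivation(1)[OF coeff deg_le_wdeg[of w P]] m by (simp add: wdeg_le_iff)
    then show "wdeg w (mderivation a P) - wdeg w P \<le> ereal C"
      using m by (cases "wdeg w (mderivation a P)") auto
  qed
  then show ?thesis
    by (rule order.strict_trans1) simp
qed

lemma top_part_mderivation:
  fixes a :: "'n::finite \<Rightarrow> ('n, 'a::comm_ring_1) mpoly"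
  assumes coeff: "\<And>j. deg_le w (r + w j) (a j)" and "top_part w c P P'"
  shows "top_part w (c + r) (mderivation a P) (mderivation (\<lambda>j. hcomp w (ereal (r + w j)) (a j)) P')"
proof -
  let ?b = "\<lambda>j. hcomp w (ereal (r + w j)) (a j)"
  have top_coeff: "top_part w (r + w j) (a j) (?b j)" for j
    using coeff by (rule top_part_hcomp)
  have P': "homogeneous w c P'" and "deg_less w c (P - P')"
    using assms(2) by (simp_all add: top_part_def)
  have "mderivation a P - mderivation ?b P'
      = (mderivation a P - mderivation a P') + (mderivation a P' - mderivation ?b P')"
    by simp
  also have "\<dots> = mderivation a (P - P') + mderivation (\<lambda>j. a j - ?b j) P'"
    by (simp add: mderivation_def mpderiv_diff right_diff_distrib left_diff_distrib sum_subtractf)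
  finally have "mderivation a P - mderivation ?b P' = mderivation a (P - P') + mderivation (\<lambda>j. a j - ?b j) P'" .
  moreover have "deg_less w (c + r) (mderivation a (P - P'))"
    using coeff \<open>deg_less w c (P - P')\<close> by (rule deg_bounds_mderivation(2))
  moreover have "deg_less w (c + r) (mderivation (\<lambda>j. a j - ?b j) P')"
    using top_coeff P' by (intro deg_bounds_mderivation(3) deg_bounds_mono(4)) (simp_all add: top_part_def)
  moreover have "homogeneous w (c + r) (mderivation ?b P')"
    using top_coeff P' by (intro deg_bounds_mderivation(4)) (simp_all add: top_part_def)
  ultimately show ?thesis
    by (simp add: top_part_def deg_less_add)
qed

lemma locally_nilpotent_leading_mderivation:
  fixes a :: "'n::finite \<Rightarrow> ('n, 'a::comm_ring_1) mpoly"
  assumes coeff: "\<And>j. deg_le w (r + w j) (a j)" and "locally_nilpotent (mderivation a)"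
  shows "locally_nilpotent (mderivation (\<lambda>j. hcomp w (ereal (r + w j)) (a j)))"
  unfolding locally_nilpotent_def
proof
  let ?B = "mderivation (\<lambda>j. hcomp w (ereal (r + w j)) (a j))"
  have homogeneous_nilpotent: "\<exists>k. (?B ^^ k) P = 0" if "homogeneous w e P" for e P
  proof -
    have top: "top_part w (e + real k * r) ((mderivation a ^^ k) P) ((?B ^^ k) P)" for k
    proof (induction k)
      case (Suc k)
      then show ?case
        using top_part_mderivation[OF coeff Suc] by (simp add: algebra_simps)
    qed (simp add: top_part_self[OF that])
    obtain k where "(mderivation a ^^ k) P = 0"
      using assms(2) by (auto simp: locally_nilpotent_def)
    then have "top_part w (e + real k * r) 0 ((?B ^^ k) P)"
      using top[of k] by simp
    then have "(?B ^^ k) P = 0"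
      by (rule top_part_deg_less_eq_0[rotated]) simp
    then show ?thesis ..
  qed
  fix P
  show "\<exists>k. (?B ^^ k) P = 0"
    using funpow_eq_0_sum[OF additive_mderivation, where A = "keys P" and g = "\<lambda>m. single m (lookup P m)"]
      homogeneous_nilpotent[OF homogeneous_single]
    by (simp flip: mpoly_eq_sum_single)
qed

lemma msubst_hcomp_eq_0:
  fixes F' :: "'n \<Rightarrow> ('m::finite, 'a::comm_ring_1) mpoly"
  assumes "\<And>j. homogeneous w (d j) (F' j)" "msubst Q F' = 0" "e \<in> mdeg d ` keys Q"
  shows "msubst (hcomp d (ereal e) Q) F' = 0"
proof (rule homogeneous_sum_eq_0[where X = "\<lambda>e. msubst (hcomp d (ereal e) Q) F'"])
  show "homogeneous w e (msubst (hcomp d (ereal e) Q) F')" for e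
    using top_part_msubst[of w d F' F' e, OF top_part_self[OF assms(1)] homogeneous_hcomp]
    by (simp add: top_part_def)
  show "(\<Sum>e\<in>mdeg d ` keys Q. msubst (hcomp d (ereal e) Q) F') = 0"
    using assms(2) by (simp flip: msubst_sum add: sum_hcomp)
qed (use assms(3) in simp_all)

lemma msubst_leading_mderivation_eq_0:
  fixes a :: "'n::finite \<Rightarrow> ('n, 'a::comm_ring_1) mpoly" and F F' :: "'n \<Rightarrow> ('m::finite, 'a) mpoly"
  assumes coeff: "\<And>j. deg_le d (r + d j) (a j)"
    and top: "\<And>j. top_part w (d j) (F j) (F' j)"
    and compat: "\<And>e Q. deg_less w e (msubst Q F) \<Longrightarrow> deg_less w (e + r) (msubst (mderivation a Q) F)"
    and "msubst Q F' = 0"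
  shows "msubst (mderivation (\<lambda>j. hcomp d (ereal (r + d j)) (a j)) Q) F' = 0"
proof -
  let ?B = "mderivation (\<lambda>j. hcomp d (ereal (r + d j)) (a j))"
  have homogeneous_case: "msubst (?B Q) F' = 0" if Q: "homogeneous d e Q" "msubst Q F' = 0" for e Q
  proof -
    have "deg_less w e (msubst Q F)"
      using top_part_msubst[OF top Q(1)] Q(2) by (simp add: top_part_def)
    then have "deg_less w (e + r) (msubst (mderivation a Q) F)"
      by (rule compat)
    moreover have top_B: "top_part d (e + r) (mderivation a Q) (?B Q)"
      by (rule top_part_mderivation[OF coeff top_part_self[OF Q(1)]])
    then have "deg_less w (e + r) (msubst (mderivation a Q - ?B Q) F)"
      by (intro deg_less_msubst[OF top]) (simp add: top_part_def)
    ultimately have "deg_less w (e + r) (msubst (mderivation a Q) F - msubst (mderivation a Q - ?B Q) F)"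
      by (rule deg_less_diff)
    then have "deg_less w (e + r) (msubst (?B Q) F)"
      by (simp add: msubst_diff)
    moreover have "top_part w (e + r) (msubst (?B Q) F) (msubst (?B Q) F')"
      using top_B by (intro top_part_msubst[OF top]) (simp add: top_part_def)
    ultimately show ?thesis
      by (rule top_part_deg_less_eq_0)
  qed
  have F': "homogeneous w (d j) (F' j)" for j
    using top by (simp add: top_part_def)
  have "msubst (?B (hcomp d (ereal e) Q)) F' = 0" if "e \<in> mdeg d ` keys Q" for e
    by (rule homogeneous_case[OF homogeneous_hcomp]) (rule msubst_hcomp_eq_0[OF F' \<open>msubst Q F' = 0\<close> that])
  then show ?thesis
    by (subst sum_hcomp[of d Q, symmetric])
      (simp add: additive.sum[OF additive_mderivation] msubst_sum)
qed

text \<open>Algebraic closedness and the positivity of \<open>w\<close> are needed in the paper only for \<open>deg\<^sub>1\<close> to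
  behave like a degree.\<close>

theorem lemma6:
  fixes w :: "'n::finite \<Rightarrow> real"
    and F G :: "'n \<Rightarrow> ('n, 'a::field_char_0) mpoly"
    and i :: 'n
  assumes "alg_closed TYPE('a)"
    and "\<forall>j. w j > 0"
    and "inverse_maps F G"
  defines "w2 \<equiv> (\<lambda>j. real_of_ereal (wdeg w (F j)))"
    and "\<Delta> \<equiv> (\<lambda>P. jac (G(i := P)))"
    and "I \<equiv> {Q :: ('n, 'a) mpoly. msubst Q (\<lambda>j. lead w (F j)) = 0}"
  assumes "der_deg w2 \<Delta> \<ge> ereal (- w i)"
  shows "locally_nilpotent (lead_der w2 \<Delta>) \<and> (\<forall>Q\<in>I. lead_der w2 \<Delta> Q \<in> I)"
proof -
  note inv = \<open>inverse_maps F G\<close>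
  let ?a = "\<lambda>j. jac (G(i := mvar j))"
  have \<Delta>: "\<Delta> = mderivation ?a"
    unfolding \<Delta>_def by (rule jac_fun_upd_eq_mderivation)
  have "der_deg w2 \<Delta> < \<infinity>"
    unfolding \<Delta> by (rule der_deg_mderivation_less_PInf)
  then obtain r where r: "der_deg w2 \<Delta> = ereal r" "r \<ge> - w i"
    using \<open>der_deg w2 \<Delta> \<ge> ereal (- w i)\<close> by (cases "der_deg w2 \<Delta>") auto
  have coeff: "deg_le w2 (r + w2 j) (?a j)" for j
    using deg_le_der_deg[OF r(1)] by (simp add: \<Delta>_def)
  have lead: "lead_der w2 \<Delta> = mderivation (\<lambda>j. hcomp w2 (ereal (r + w2 j)) (?a j))"
    using lead_der_eq_mderivation[OF r(1)] by (simp add: \<Delta>_def)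
  have nilpotent: "locally_nilpotent (lead_der w2 \<Delta>)"
    unfolding lead using locally_nilpotent_jac_fun_upd[OF inv, of i, folded \<Delta>_def, unfolded \<Delta>]
    by (rule locally_nilpotent_leading_mderivation[OF coeff])
  have compat: "deg_less w (e + r) (msubst (mderivation ?a Q) F)" if "deg_less w e (msubst Q F)" for e Q
  proof -
    have "deg_less w (e - w i) (msubst (\<Delta> Q) F)"
      unfolding \<Delta>_def by (rule deg_less_msubst_jac_fun_upd[OF inv that])
    then show ?thesis
      unfolding \<Delta> by (rule deg_bounds_mono(3)) (use r(2) in simp)
  qed
  have top: "top_part w (w2 j) (F j) (lead w (F j))" for j
    unfolding w2_def by (rule top_part_lead)
  have invariant: "lead_der w2 \<Delta> Q \<in> I" if "Q \<in> I" for Q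
  proof -
    have Q: "msubst Q (\<lambda>j. lead w (F j)) = 0"
      using that by (simp add: I_def)
    have "msubst (lead_der w2 \<Delta> Q) (\<lambda>j. lead w (F j)) = 0"
      unfolding lead by (rule msubst_leading_mderivation_eq_0[OF coeff top compat Q])
    then show ?thesis
      by (simp add: I_def)
  qed
  show ?thesis
    using nilpotent invariant by blast
qed

end
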